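(* Let $\mathcal G$ be a strongly connected directed graph with no self loops, vertex set $\mathcal V=\{1,\dots,n\}$ and edge set $\mathcal E=\{1,\dots,m\}$. Let $B=S-D$ be its incidence matrix, let $Q=DB^\mathsf{T}$, and let $W$ and $Q^\ddagger$ be as in the context. Let $\omega^{\mathrm u}\in\mathbb{R}^n$ be constant. Consider the dynamics \[ \dot{\tilde\theta}(t)=\omega^{\mathrm u}+c(t),\qquad \tilde\beta(t)=B^\mathsf{T}\tilde\theta(t),\qquad y(t)=D\tilde\beta(t). \] Let $\mathcal T$ be an outward directed spanning tree with root $r$, and let $g_1,\dots,g_{n-1}$ be an ordering of its edges such that $g_a\prec g_b$ implies $a<b$. Let $k,k_2>0$. Let $0<t_1<\dots<t_n$ satisfy $t_{j+1}-t_j>|\tilde\beta_{g_j}(t_j)|/k_2$ for each $j$. For each $i\neq r$, let $j(i)$ be the unique index with $\mathrm{dst}(g_{j(i)})=i$. Let the control be \[ c_i(t)=\begin{cases} k\,y_i(t) & t<t_1,\\ k\,y_i(t_1)+k_2\,\mathrm{sign}\big(\tilde\beta_{g_{j(i)}}(t)\big) & i\neq r,\ t_{j(i)}\le t<t_{j(i)+1},\\ k\,y_i(t_1) & \text{otherwise.}\end{cases} \] Assume \[ \tilde\beta(t_1)=-k^{-1}B^\mathsf{T}Q^\ddagger\omega^{\mathrm u} \qquad\text{and}\qquad \omega^{\mathrm u}+k\,y(t_1)=W\omega^{\mathrm u}. \] Then $\tilde\beta_a(t_n)=0$ for every edge $a\in\mathcal T$.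
   Context: The matrices $S,D\in\mathbb{R}^{n\times m}$ are defined by $S_{ie}=1$ if node $i$ is the source of edge $e$ and $0$ otherwise, and $D_{ie}=1$ if node $i$ is the destination of edge $e$ and $0$ otherwise. The vector $\mathbf{1}$ is the all-ones vector. The matrix $Q=DB^\mathsf{T}$ is an irreducible rate matrix. Let $z>0$ satisfy $z^\mathsf{T}Q=0$ and $\mathbf{1}^\mathsf{T}z=1$, and set $W=\mathbf{1}z^\mathsf{T}$. Write $Q=T\begin{bmatrix}0&0\\0&\Lambda\end{bmatrix}T^{-1}$, where $T$ is invertible with first column $\mathbf{1}$, the first row of $T^{-1}$ is $z^\mathsf{T}$, and $\Lambda$ is invertible. Define $Q^\ddagger=T\begin{bmatrix}0&0\\0&\Lambda^{-1}\end{bmatrix}T^{-1}$. An outward directed spanning tree with root $r$ is a set $\mathcal T$ of $n-1$ edges such that every vertex is reachable from $r$ by a directed path in $\mathcal T$, and each vertex other than $r$ is the destination of exactly one edge of $\mathcal T$. For $f,g\in\mathcal T$, $f\prec g$ means there is a directed walk of nonzero length in $\mathcal T$ from $\mathrm{dst}(f)$ to $\mathrm{dst}(g)$. The convention $\mathrm{sign}(0)=0$ is used. *)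

theory Defs
  imports Complex_Main "Jordan_Normal_Form.Matrix"
begin

text \<open>Vertices are 0..n-1 and edges are 0..m-1 (0-based indices, matching Jordan_Normal_Form).
  An edge e goes from src e to dst e.\<close>

definition edge_rel :: "nat \<Rightarrow> (nat \<Rightarrow> nat) \<Rightarrow> (nat \<Rightarrow> nat) \<Rightarrow> nat set \<Rightarrow> (nat \<times> nat) set" where
  "edge_rel m src dst A = {(src e, dst e) | e. e \<in> A \<and> e < m}"

definition digraph_ok :: "nat \<Rightarrow> nat \<Rightarrow> (nat \<Rightarrow> nat) \<Rightarrow> (nat \<Rightarrow> nat) \<Rightarrow> bool" where
  "digraph_ok n m src dst \<longleftrightarrow> (\<forall>e<m. src e < n \<and> dst e < n \<and> src e \<noteq> dst e)"

definition strongly_connected :: "nat \<Rightarrow> nat \<Rightarrow> (nat \<Rightarrow> nat) \<Rightarrow> (nat \<Rightarrow> nat) \<Rightarrow> bool" where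
  "strongly_connected n m src dst \<longleftrightarrow>
     (\<forall>u<n. \<forall>v<n. (u, v) \<in> (edge_rel m src dst UNIV)\<^sup>*)"

definition S_mat :: "nat \<Rightarrow> nat \<Rightarrow> (nat \<Rightarrow> nat) \<Rightarrow> real mat" where
  "S_mat n m src = mat n m (\<lambda>(i, e). if src e = i then 1 else 0)"

definition D_mat :: "nat \<Rightarrow> nat \<Rightarrow> (nat \<Rightarrow> nat) \<Rightarrow> real mat" where
  "D_mat n m dst = mat n m (\<lambda>(i, e). if dst e = i then 1 else 0)"

definition B_mat :: "nat \<Rightarrow> nat \<Rightarrow> (nat \<Rightarrow> nat) \<Rightarrow> (nat \<Rightarrow> nat) \<Rightarrow> real mat" where
  "B_mat n m src dst = S_mat n m src - D_mat n m dst"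

definition Q_mat :: "nat \<Rightarrow> nat \<Rightarrow> (nat \<Rightarrow> nat) \<Rightarrow> (nat \<Rightarrow> nat) \<Rightarrow> real mat" where
  "Q_mat n m src dst = D_mat n m dst * transpose_mat (B_mat n m src dst)"

definition W_mat :: "nat \<Rightarrow> real vec \<Rightarrow> real mat" where
  "W_mat n z = mat n n (\<lambda>(i, j). z $ j)"

definition is_Qddag :: "nat \<Rightarrow> real mat \<Rightarrow> real vec \<Rightarrow> real mat \<Rightarrow> bool" where
  "is_Qddag n Q z Qd \<longleftrightarrow>
    (\<exists>T Ti L Li.
       T \<in> carrier_mat n n \<and> Ti \<in> carrier_mat n n \<and>
       inverts_mat T Ti \<and> inverts_mat Ti T \<and>
       col T 0 = vec n (\<lambda>_. 1) \<and> row Ti 0 = z \<and>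
       L \<in> carrier_mat (n - 1) (n - 1) \<and> Li \<in> carrier_mat (n - 1) (n - 1) \<and>
       inverts_mat L Li \<and> inverts_mat Li L \<and>
       Q = T * four_block_mat (0\<^sub>m 1 1) (0\<^sub>m 1 (n - 1)) (0\<^sub>m (n - 1) 1) L * Ti \<and>
       Qd = T * four_block_mat (0\<^sub>m 1 1) (0\<^sub>m 1 (n - 1)) (0\<^sub>m (n - 1) 1) Li * Ti)"

definition out_spanning_tree ::
  "nat \<Rightarrow> nat \<Rightarrow> (nat \<Rightarrow> nat) \<Rightarrow> (nat \<Rightarrow> nat) \<Rightarrow> nat set \<Rightarrow> nat \<Rightarrow> bool" where
  "out_spanning_tree n m src dst Tr r \<longleftrightarrow>
     Tr \<subseteq> {..<m} \<and> card Tr = n - 1 \<and> r < n \<and>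
     (\<forall>v<n. (r, v) \<in> (edge_rel m src dst Tr)\<^sup>*) \<and>
     (\<forall>v<n. v \<noteq> r \<longrightarrow> (\<exists>!e. e \<in> Tr \<and> dst e = v))"

definition tree_prec ::
  "nat \<Rightarrow> (nat \<Rightarrow> nat) \<Rightarrow> (nat \<Rightarrow> nat) \<Rightarrow> nat set \<Rightarrow> nat \<Rightarrow> nat \<Rightarrow> bool" where
  "tree_prec m src dst Tr f g \<longleftrightarrow> (dst f, dst g) \<in> (edge_rel m src dst Tr)\<^sup>+"

end

theory Submission
  imports Defs
begin

text \<open>From \<open>t\<^sub>1\<close> on, the hypothesis \<open>\<omega> + k y(t\<^sub>1) = W \<omega>\<close> gives every node the same
  drift \<open>z\<^sup>T \<omega>\<close>, since all rows of \<open>W = 1 z\<^sup>T\<close> agree; so the difference \<open>\<theta>\<^sub>p - \<theta>\<^sub>q\<close> across a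
  tree edge \<open>g\<^sub>j = (p, q)\<close> is driven by the sign terms alone. The edge entering \<open>p\<close> precedes
  \<open>g\<^sub>j\<close> and has stopped switching by \<open>t\<^sub>j\<close>, so on \<open>[t\<^sub>j, t\<^sub>j\<^sub>+\<^sub>1)\<close> the difference obeys
  \<open>f' = -k\<^sub>2 sgn f\<close> and, by the gap condition on \<open>t\<^sub>j\<^sub>+\<^sub>1 - t\<^sub>j\<close>, reaches zero; afterwards
  neither endpoint switches and it stays zero up to \<open>t\<^sub>n\<close>.\<close>

lemma DERIV_nonpos_imp_decreasing_finite_exceptions:
  fixes f :: "real \<Rightarrow> real"
  assumes "finite S" and "a \<le> b" and "continuous_on {a..b} f"
    and "\<And>x. a < x \<Longrightarrow> x < b \<Longrightarrow> x \<notin> S \<Longrightarrow> \<exists>y. DERIV f x :> y \<and> y \<le> 0"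
  shows "f b \<le> f a"
  using assms
proof (induction S arbitrary: a b rule: finite_induct)
  case empty
  then show ?case
    by (intro DERIV_nonpos_imp_decreasing_open[of a b f]) simp_all
next
  case (insert c S)
  have sub: "f v \<le> f u" if "a \<le> u" "u \<le> v" "v \<le> b" "\<not> (u < c \<and> c < v)" for u v
  proof (rule insert.IH)
    show "continuous_on {u..v} f"
      using insert.prems(2) by (rule continuous_on_subset) (use that in auto)
    fix x assume "u < x" "x < v" "x \<notin> S"
    then show "\<exists>y. DERIV f x :> y \<and> y \<le> 0"
      using insert.prems(3)[of x] that by auto
  qed fact
  show ?case
  proof (cases "a < c \<and> c < b")
    case True
    then have "f c \<le> f a" and "f b \<le> f c"
      using sub by auto
    then show ?thesis by simp
  next
    case False
    then show ?thesis using sub[of a b] insert.prems(1) by auto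
  qed
qed

lemma DERIV_zero_imp_constant_finite_exceptions:
  fixes f :: "real \<Rightarrow> real"
  assumes S: "finite S" and ab: "a \<le> b" and cont: "continuous_on {a..b} f"
    and deriv: "\<And>x. a < x \<Longrightarrow> x < b \<Longrightarrow> x \<notin> S \<Longrightarrow> DERIV f x :> 0"
  shows "f b = f a"
proof -
  have "f b \<le> f a"
    using deriv by (intro DERIV_nonpos_imp_decreasing_finite_exceptions[OF S ab cont]) blast
  moreover have "(\<lambda>x. - f x) b \<le> (\<lambda>x. - f x) a"
  proof (rule DERIV_nonpos_imp_decreasing_finite_exceptions[OF S ab])
    show "continuous_on {a..b} (\<lambda>x. - f x)"
      using cont by (rule continuous_on_minus)
    fix x assume "a < x" "x < b" "x \<notin> S"
    then have "DERIV (\<lambda>x. - f x) x :> - 0"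
      by (intro DERIV_minus deriv)
    then show "\<exists>y. DERIV (\<lambda>x. - f x) x :> y \<and> y \<le> 0"
      by auto
  qed
  ultimately show ?thesis by simp
qed

lemma continuous_on_nonvanishing_sgn_eq:
  fixes f :: "real \<Rightarrow> real"
  assumes cont: "continuous_on {a..b} f" and nz: "\<And>x. x \<in> {a..b} \<Longrightarrow> f x \<noteq> 0"
    and x: "x \<in> {a..b}"
  shows "sgn (f x) = sgn (f a)"
proof (rule ccontr)
  assume "sgn (f x) \<noteq> sgn (f a)"
  then have "f a < 0 \<and> 0 < f x \<or> f x < 0 \<and> 0 < f a"
    using nz[of a] nz[of x] x by (auto simp: sgn_if split: if_splits)
  moreover have "continuous_on {a..x} f"
    using cont by (rule continuous_on_subset) (use x in auto)
  ultimately obtain y where "a \<le> y" "y \<le> x" "f y = 0"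
    using IVT'[of f a 0 x] IVT2'[of f x 0 a] x by fastforce
  then show False using nz[of y] x by auto
qed

text \<open>Under \<open>f' = -K sgn f\<close> the value \<open>f\<close> moves towards zero at speed \<open>K\<close> and stays there
  once reached, because \<open>f\<^sup>2\<close> is nonincreasing.\<close>

lemma sgn_feedback_reaches_zero:
  fixes f :: "real \<Rightarrow> real"
  assumes S: "finite S" and ab: "a \<le> b" and cont: "continuous_on {a..b} f" and K: "K > 0"
    and deriv: "\<And>x. a < x \<Longrightarrow> x < b \<Longrightarrow> x \<notin> S \<Longrightarrow> DERIV f x :> - K * sgn (f x)"
    and gap: "\<bar>f a\<bar> < K * (b - a)"
  shows "f b = 0"
proof (cases "\<exists>s\<in>{a..b}. f s = 0")
  case True
  then obtain s where s: "s \<in> {a..b}" "f s = 0" by blast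
  have "f b * f b \<le> f s * f s"
  proof (rule DERIV_nonpos_imp_decreasing_finite_exceptions[OF S, where f = "\<lambda>x. f x * f x"])
    show "s \<le> b" using s by simp
    have "continuous_on {s..b} f"
      using cont by (rule continuous_on_subset) (use s in auto)
    then show "continuous_on {s..b} (\<lambda>x. f x * f x)"
      by (intro continuous_on_mult)
    fix x assume "s < x" "x < b" "x \<notin> S"
    then have "DERIV f x :> - K * sgn (f x)"
      using s by (intro deriv) auto
    from DERIV_mult[OF this this]
    have "DERIV (\<lambda>x. f x * f x) x :> - 2 * K * \<bar>f x\<bar>"
      by (simp add: abs_sgn algebra_simps)
    then show "\<exists>y. DERIV (\<lambda>x. f x * f x) x :> y \<and> y \<le> 0"
      using K by fastforce
  qed
  then show ?thesis using s by (auto simp: mult_le_0_iff)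
next
  case False
  define \<sigma> where "\<sigma> = sgn (f a)"
  have sgn_eq: "sgn (f x) = \<sigma>" if "x \<in> {a..b}" for x
    unfolding \<sigma>_def using False that by (intro continuous_on_nonvanishing_sgn_eq[OF cont]) auto
  have "\<sigma> * \<sigma> = 1"
    using False ab by (auto simp: \<sigma>_def sgn_if)
  have "\<sigma> * f b + K * b \<le> \<sigma> * f a + K * a"
  proof (rule DERIV_nonpos_imp_decreasing_finite_exceptions[OF S ab, where f = "\<lambda>x. \<sigma> * f x + K * x"])
    show "continuous_on {a..b} (\<lambda>x. \<sigma> * f x + K * x)"
      using cont by (intro continuous_intros)
    fix x assume x: "a < x" "x < b" "x \<notin> S"
    have "DERIV (\<lambda>x. \<sigma> * f x + K * x) x :> \<sigma> * (- K * \<sigma>) + K * 1"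
      using deriv[OF x] sgn_eq[of x] x
      by (intro DERIV_add DERIV_cmult DERIV_ident) simp_all
    then show "\<exists>y. DERIV (\<lambda>x. \<sigma> * f x + K * x) x :> y \<and> y \<le> 0"
      using \<open>\<sigma> * \<sigma> = 1\<close> by (intro exI[of _ 0]) (simp add: algebra_simps)
  qed
  moreover have "\<sigma> * f a = \<bar>f a\<bar>" and "\<sigma> * f b = \<bar>f b\<bar>"
    using sgn_eq[of b] ab by (auto simp: \<sigma>_def abs_sgn)
  ultimately show ?thesis using gap by (simp add: algebra_simps)
qed

lemma B_mat_transpose_mult_vec_nth:
  assumes graph: "digraph_ok n m src dst" and e: "e < m" and x: "x \<in> carrier_vec n"
  shows "(transpose_mat (B_mat n m src dst) *\<^sub>v x) $ e = x $ src e - x $ dst e"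
proof -
  have ends: "src e < n" "dst e < n"
    using graph e by (auto simp: digraph_ok_def)
  have "(transpose_mat (B_mat n m src dst) *\<^sub>v x) $ e
      = (\<Sum>i<n. (if src e = i then x $ i else 0) - (if dst e = i then x $ i else 0))"
    using e x by (auto simp: B_mat_def S_mat_def D_mat_def scalar_prod_def lessThan_atLeast0
        left_diff_distrib intro: sum.cong)
  also have "\<dots> = x $ src e - x $ dst e"
    using ends by (simp add: sum_subtractf)
  finally show ?thesis .
qed

lemma W_mat_mult_vec_nth:
  assumes "i < n" and "x \<in> carrier_vec n"
  shows "(W_mat n z *\<^sub>v x) $ i = z \<bullet> x"
  using assms by (simp add: W_mat_def scalar_prod_def mult.commute)

lemma out_spanning_tree_dst_ne_root:
  assumes graph: "digraph_ok n m src dst" and tree: "out_spanning_tree n m src dst Tr r"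
    and e: "e \<in> Tr" and irrefl: "\<not> tree_prec m src dst Tr e e"
  shows "dst e \<noteq> r"
proof
  assume root: "dst e = r"
  have "e < m"
    using tree e by (auto simp: out_spanning_tree_def)
  then have "(src e, dst e) \<in> edge_rel m src dst Tr" and "src e < n"
    using graph e by (auto simp: edge_rel_def digraph_ok_def)
  moreover have "\<forall>v<n. (r, v) \<in> (edge_rel m src dst Tr)\<^sup>*"
    using tree by (simp add: out_spanning_tree_def)
  ultimately have "(dst e, dst e) \<in> (edge_rel m src dst Tr)\<^sup>+"
    using root by (meson rtrancl_into_trancl1)
  with irrefl show False
    by (simp add: tree_prec_def)
qed

lemma out_spanning_tree_in_edge_index:
  assumes tree: "out_spanning_tree n m src dst Tr r" and g: "bij_betw g {1..n-1} Tr"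
    and j: "j \<in> {1..n-1}" and v: "dst (g j) < n" "dst (g j) \<noteq> r"
  shows "(THE i. i \<in> {1..n-1} \<and> dst (g i) = dst (g j)) = j"
proof (rule the_equality)
  fix i assume i: "i \<in> {1..n-1} \<and> dst (g i) = dst (g j)"
  have "\<exists>!e. e \<in> Tr \<and> dst e = dst (g j)"
    using tree v by (simp add: out_spanning_tree_def)
  moreover have "g i \<in> Tr" and "g j \<in> Tr"
    using g i j by (auto dest: bij_betwE)
  ultimately have "g i = g j"
    using i by blast
  then show "i = j"
    using g i j by (auto simp: bij_betw_def inj_on_def)
qed (use j in simp)

locale tree_sign_control =
  fixes n m :: nat and src dst :: "nat \<Rightarrow> nat"
    and \<omega> :: "real vec" and \<theta> :: "real \<Rightarrow> real vec" and c :: "real \<Rightarrow> nat \<Rightarrow> real"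
    and Tr :: "nat set" and r :: nat and g :: "nat \<Rightarrow> nat"
    and k k2 :: real and t :: "nat \<Rightarrow> real" and X :: "real set" and C :: real
  assumes graph: "digraph_ok n m src dst"
    and \<theta>_dim: "\<forall>s\<ge>0. \<theta> s \<in> carrier_vec n"
    and \<theta>_cont: "\<forall>i<n. continuous_on {0..} (\<lambda>s. \<theta> s $ i)"
    and X_fin: "finite X"
    and dyn: "\<forall>s. s > 0 \<and> s \<notin> X \<longrightarrow>
               (\<forall>i<n. ((\<lambda>u. \<theta> u $ i) has_real_derivative (\<omega> $ i + c s i)) (at s))"
    and tree: "out_spanning_tree n m src dst Tr r"
    and g_bij: "bij_betw g {1..n-1} Tr"
    and g_ord: "\<forall>a\<in>{1..n-1}. \<forall>b\<in>{1..n-1}.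
                  tree_prec m src dst Tr (g a) (g b) \<longrightarrow> a < b"
    and k2_pos: "k2 > 0"
    and t1_pos: "0 < t 1"
    and t_mono: "\<forall>j\<in>{1..<n}. t j < t (Suc j)"
    and t_gap: "\<forall>j\<in>{1..<n}. t (Suc j) - t j >
       \<bar>(transpose_mat (B_mat n m src dst) *\<^sub>v \<theta> (t j)) $ g j\<bar> / k2"
    and ctrl: "\<forall>s\<ge>0. \<forall>i<n. c s i =
       (let \<beta> = (\<lambda>u. transpose_mat (B_mat n m src dst) *\<^sub>v \<theta> u);
            y = (\<lambda>u. D_mat n m dst *\<^sub>v \<beta> u);
            J = (THE j. j \<in> {1..n-1} \<and> dst (g j) = i)
        in if s < t 1 then k * (y s $ i)
           else if i \<noteq> r \<and> t J \<le> s \<and> s < t (Suc J)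
             then k * (y (t 1) $ i) + k2 * sgn (\<beta> s $ g J)
           else k * (y (t 1) $ i))"
    and uniform_drift: "\<forall>i<n.
       \<omega> $ i + k * (D_mat n m dst *\<^sub>v (transpose_mat (B_mat n m src dst) *\<^sub>v \<theta> (t 1))) $ i = C"
begin

definition \<beta> :: "real \<Rightarrow> real vec" where
  "\<beta> s = transpose_mat (B_mat n m src dst) *\<^sub>v \<theta> s"

definition in_edge_index :: "nat \<Rightarrow> nat" where
  "in_edge_index v = (THE j. j \<in> {1..n-1} \<and> dst (g j) = v)"

definition switch :: "nat \<Rightarrow> real \<Rightarrow> real" where
  "switch v s = (if v \<noteq> r \<and> t (in_edge_index v) \<le> s \<and> s < t (Suc (in_edge_index v))
     then k2 * sgn (\<beta> s $ g (in_edge_index v)) else 0)"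

lemma \<beta>_nth: "e < m \<Longrightarrow> 0 \<le> s \<Longrightarrow> \<beta> s $ e = \<theta> s $ src e - \<theta> s $ dst e"
  using graph \<theta>_dim by (simp add: \<beta>_def B_mat_transpose_mult_vec_nth)

lemma \<theta>_nth_deriv:
  assumes v: "v < n" and s: "t 1 \<le> s" "s \<notin> X"
  shows "((\<lambda>u. \<theta> u $ v) has_real_derivative C + switch v s) (at s)"
proof -
  have "0 < s" using s t1_pos by linarith
  then have "((\<lambda>u. \<theta> u $ v) has_real_derivative \<omega> $ v + c s v) (at s)"
    using dyn v s by blast
  moreover have "\<omega> $ v + c s v = C + switch v s"
    using ctrl uniform_drift \<open>0 < s\<close> s v
    by (simp add: Let_def switch_def in_edge_index_def \<beta>_def algebra_simps)
  ultimately show ?thesis by simp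
qed

lemma tree_edge:
  assumes "j \<in> {1..n-1}"
  shows "g j \<in> Tr" and "g j < m" and "src (g j) < n" and "dst (g j) < n"
proof -
  show "g j \<in> Tr" using g_bij assms by (auto dest: bij_betwE)
  then show "g j < m" using tree by (auto simp: out_spanning_tree_def)
  then show "src (g j) < n" "dst (g j) < n" using graph by (auto simp: digraph_ok_def)
qed

lemma tree_edge_dst_ne_root: "j \<in> {1..n-1} \<Longrightarrow> dst (g j) \<noteq> r"
  using g_ord by (intro out_spanning_tree_dst_ne_root[OF graph tree] tree_edge) blast+

lemma in_edge_index_dst: "j \<in> {1..n-1} \<Longrightarrow> in_edge_index (dst (g j)) = j"
  unfolding in_edge_index_def
  by (intro out_spanning_tree_in_edge_index[OF tree g_bij] tree_edge tree_edge_dst_ne_root)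

lemma t_le:
  assumes "1 \<le> i" and "i \<le> i'" and "i' \<le> n"
  shows "t i \<le> t i'"
proof (rule lift_Suc_mono_le_ivl[where N = "{1..<n}"])
  show "t j \<le> t (Suc j)" if "j \<in> {1..<n}" for j
    using t_mono that by (simp add: less_imp_le)
qed (use assms in auto)

lemma switch_dst:
  "j \<in> {1..n-1} \<Longrightarrow>
     switch (dst (g j)) s = (if t j \<le> s \<and> s < t (Suc j) then k2 * sgn (\<beta> s $ g j) else 0)"
  by (simp add: switch_def in_edge_index_dst tree_edge_dst_ne_root)

text \<open>The parent edge of the tail of \<open>g j\<close> precedes \<open>g j\<close>, so its switching window is over.\<close>

lemma switch_src:
  assumes j: "j \<in> {1..n-1}" and s: "t j \<le> s"
  shows "switch (src (g j)) s = 0"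
proof (cases "src (g j) = r")
  case False
  have "\<exists>!e. e \<in> Tr \<and> dst e = src (g j)"
    using tree tree_edge(3)[OF j] False by (simp add: out_spanning_tree_def)
  then obtain e where e: "e \<in> Tr" "dst e = src (g j)"
    by blast
  then obtain i where i: "i \<in> {1..n-1}" "e = g i"
    using g_bij by (metis bij_betw_def imageE)
  have "(src (g j), dst (g j)) \<in> edge_rel m src dst Tr"
    using tree_edge(1,2)[OF j] by (auto simp: edge_rel_def)
  then have "tree_prec m src dst Tr (g i) (g j)"
    using e i by (simp add: tree_prec_def r_into_trancl')
  then have "i < j"
    using g_ord i j by blast
  then have "t (Suc i) \<le> t j"
    using j by (intro t_le) auto
  then show ?thesis
    using in_edge_index_dst[OF i(1)] e i s by (simp add: switch_def)
qed (simp add: switch_def)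

lemma tree_edge_\<beta>_vanishes:
  assumes j: "j \<in> {1..n-1}"
  shows "\<beta> (t n) $ g j = 0"
proof -
  define p q where "p = src (g j)" and "q = dst (g j)"
  define F where "F = (\<lambda>s. \<theta> s $ p - \<theta> s $ q)"
  have t1_le: "t 1 \<le> t j" and "t (Suc j) \<le> t n"
    using j by (auto intro: t_le)
  then have t_order: "0 \<le> t j" "t j < t (Suc j)" "t (Suc j) \<le> t n"
    using t1_pos t_mono j by auto
  have F_\<beta>: "F s = \<beta> s $ g j" if "0 \<le> s" for s
    using that by (simp add: F_def p_def q_def \<beta>_nth tree_edge(2)[OF j])
  have F_cont: "continuous_on {u..v} F" if "0 \<le> u" for u v
  proof -
    have "continuous_on {0..} F"
      using \<theta>_cont tree_edge(3,4)[OF j] by (auto simp: F_def p_def q_def intro!: continuous_intros)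
    then show ?thesis by (rule continuous_on_subset) (use that in auto)
  qed
  have F_deriv: "DERIV F s :> - switch q s" if "t j \<le> s" "s \<notin> X" for s
  proof -
    have "t 1 \<le> s" using that t1_le by linarith
    have "DERIV F s :> (C + switch p s) - (C + switch q s)"
      unfolding F_def using tree_edge(3,4)[OF j] \<open>t 1 \<le> s\<close> that
      by (intro DERIV_diff \<theta>_nth_deriv) (simp_all add: p_def q_def)
    then show ?thesis
      using switch_src[OF j] that by (simp add: p_def)
  qed
  have "F (t (Suc j)) = 0"
  proof (rule sgn_feedback_reaches_zero[OF X_fin, where f = F and K = k2])
    fix x assume "t j < x" "x < t (Suc j)" "x \<notin> X"
    then show "DERIV F x :> - k2 * sgn (F x)"
      using F_deriv[of x] F_\<beta>[of x] t_order by (simp add: q_def switch_dst[OF j])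
  next
    show "\<bar>F (t j)\<bar> < k2 * (t (Suc j) - t j)"
      using t_gap j k2_pos F_\<beta>[of "t j"] t_order by (auto simp: \<beta>_def divide_less_eq mult.commute)
  qed (use t_order F_cont k2_pos in auto)
  moreover have "F (t n) = F (t (Suc j))"
  proof (rule DERIV_zero_imp_constant_finite_exceptions[OF X_fin, where f = F])
    fix x assume "t (Suc j) < x" "x < t n" "x \<notin> X"
    then show "DERIV F x :> 0"
      using F_deriv[of x] t_order by (simp add: q_def switch_dst[OF j])
  qed (use t_order F_cont in auto)
  ultimately show ?thesis
    using F_\<beta>[of "t n"] t_order by simp
qed

end

theorem lemma4:
  fixes n m :: nat and src dst :: "nat \<Rightarrow> nat"
    and z \<omega> :: "real vec" and Qd :: "real mat"
    and \<theta> :: "real \<Rightarrow> real vec" and c :: "real \<Rightarrow> nat \<Rightarrow> real"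
    and Tr :: "nat set" and r :: nat and g :: "nat \<Rightarrow> nat"
    and k k2 :: real and t :: "nat \<Rightarrow> real" and X :: "real set"
  assumes graph: "digraph_ok n m src dst"
    and sc: "strongly_connected n m src dst"
    and z_dim: "z \<in> carrier_vec n"
    and z_pos: "\<forall>i<n. z $ i > 0"
    and z_left: "transpose_mat (Q_mat n m src dst) *\<^sub>v z = 0\<^sub>v n"
    and z_sum: "vec n (\<lambda>_. 1) \<bullet> z = 1"
    and Qd: "is_Qddag n (Q_mat n m src dst) z Qd"
    and \<omega>_dim: "\<omega> \<in> carrier_vec n"
    and \<theta>_dim: "\<forall>s\<ge>0. \<theta> s \<in> carrier_vec n"
    and \<theta>_cont: "\<forall>i<n. continuous_on {0..} (\<lambda>s. \<theta> s $ i)"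
    and X_fin: "finite X"
    and dyn: "\<forall>s. s > 0 \<and> s \<notin> X \<longrightarrow>
               (\<forall>i<n. ((\<lambda>u. \<theta> u $ i) has_real_derivative (\<omega> $ i + c s i)) (at s))"
    and tree: "out_spanning_tree n m src dst Tr r"
    and g_bij: "bij_betw g {1..n-1} Tr"
    and g_ord: "\<forall>a\<in>{1..n-1}. \<forall>b\<in>{1..n-1}.
                  tree_prec m src dst Tr (g a) (g b) \<longrightarrow> a < b"
    and k_pos: "k > 0" and k2_pos: "k2 > 0"
    and t1_pos: "0 < t 1"
    and t_mono: "\<forall>j\<in>{1..<n}. t j < t (Suc j)"
    and t_gap: "\<forall>j\<in>{1..<n}. t (Suc j) - t j >
       \<bar>(transpose_mat (B_mat n m src dst) *\<^sub>v \<theta> (t j)) $ g j\<bar> / k2"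
    and ctrl: "\<forall>s\<ge>0. \<forall>i<n. c s i =
       (let \<beta> = (\<lambda>u. transpose_mat (B_mat n m src dst) *\<^sub>v \<theta> u);
            y = (\<lambda>u. D_mat n m dst *\<^sub>v \<beta> u);
            J = (THE j. j \<in> {1..n-1} \<and> dst (g j) = i)
        in if s < t 1 then k * (y s $ i)
           else if i \<noteq> r \<and> t J \<le> s \<and> s < t (Suc J)
             then k * (y (t 1) $ i) + k2 * sgn (\<beta> s $ g J)
           else k * (y (t 1) $ i))"
    and init_beta: "transpose_mat (B_mat n m src dst) *\<^sub>v \<theta> (t 1) =
       - (1 / k) \<cdot>\<^sub>v (transpose_mat (B_mat n m src dst) *\<^sub>v (Qd *\<^sub>v \<omega>))"
    and init_y: "\<omega> + k \<cdot>\<^sub>v (D_mat n m dst *\<^sub>v (transpose_mat (B_mat n m src dst) *\<^sub>v \<theta> (t 1)))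
       = W_mat n z *\<^sub>v \<omega>"
  shows "\<forall>a\<in>Tr. (transpose_mat (B_mat n m src dst) *\<^sub>v \<theta> (t n)) $ a = 0"
proof -
  have drift: "\<forall>i<n. \<omega> $ i + k * (D_mat n m dst *\<^sub>v
      (transpose_mat (B_mat n m src dst) *\<^sub>v \<theta> (t 1))) $ i = z \<bullet> \<omega>" (is "\<forall>i<n. ?drift i = _")
  proof (intro allI impI)
    fix i assume i: "i < n"
    have "(W_mat n z *\<^sub>v \<omega>) $ i = z \<bullet> \<omega>"
      using i \<omega>_dim by (rule W_mat_mult_vec_nth)
    then show "?drift i = z \<bullet> \<omega>"
      using init_y[symmetric] i by (simp add: D_mat_def)
  qed
  interpret tree_sign_control n m src dst \<omega> \<theta> c Tr r g k k2 t X "z \<bullet> \<omega>"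
    by (unfold_locales; fact graph \<theta>_dim \<theta>_cont X_fin dyn tree g_bij g_ord k2_pos t1_pos t_mono
        t_gap ctrl drift)
  show ?thesis
    using g_bij tree_edge_\<beta>_vanishes by (auto simp: \<beta>_def bij_betw_def)
qed

end
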